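(* Let $\alpha\in(0,2)$ and suppose $\liminf_{|x|\to\infty}\frac{e^{V(x)}}{|x|^{d+\alpha}}>0$. Let $\omega:\mathbb R^d\to(0,\infty)$ be continuous. Then there exists a constant $C_2(\omega)>0$ such that for all $f\in C_b^\infty(\mathbb R^d)$, $$\int\big(f(x)-\mu_V(f)\big)^2\frac{e^{V(x)}}{(1+|x|)^{d+\alpha}}\,\mu_V(dx)\le C_2(\omega)\int\omega(x)\int\frac{(f(y)-f(x))^2}{|y-x|^{d+\alpha}}\,dy\,\mu_V(dx).$$
   Context: Let $d\ge1$. $V:\mathbb R^d\to\mathbb R$ is a locally bounded measurable function such that $e^{-V}$ is bounded and $\int e^{-V(x)}dx<\infty$; $\mu_V(dx)=\frac{e^{-V(x)}}{\int e^{-V(y)}dy}dx$, and $\mu_V(f)=\int f\,d\mu_V$. $C_b^\infty(\mathbb R^d)$ is the set of smooth functions on $\mathbb R^d$ that are bounded together with all their derivatives. *)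

theory Defs
  imports "HOL-Analysis.Analysis"
begin

text \<open>Smooth functions bounded together with all their derivatives (C_b^infinity).\<close>
coinductive Cb_inf :: "('a::euclidean_space \<Rightarrow> real) \<Rightarrow> bool" where
  "bounded (range f) \<Longrightarrow> (\<forall>x. f differentiable (at x)) \<Longrightarrow>
   (\<forall>i\<in>Basis. Cb_inf (\<lambda>x. frechet_derivative f (at x) i)) \<Longrightarrow> Cb_inf f"

definition Z_V :: "('a::euclidean_space \<Rightarrow> real) \<Rightarrow> real" where
  "Z_V V = (\<integral>y. exp (- V y) \<partial>lborel)"

definition mu_V :: "('a::euclidean_space \<Rightarrow> real) \<Rightarrow> 'a measure" where
  "mu_V V = density lborel (\<lambda>x. ennreal (exp (- V x) / Z_V V))"

definition mean_V :: "('a::euclidean_space \<Rightarrow> real) \<Rightarrow> ('a \<Rightarrow> real) \<Rightarrow> real" where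
  "mean_V V f = (\<integral>x. f x \<partial>mu_V V)"

definition admissible_V :: "('a::euclidean_space \<Rightarrow> real) \<Rightarrow> bool" where
  "admissible_V V \<longleftrightarrow> V \<in> borel_measurable lborel
     \<and> (\<forall>K. compact K \<longrightarrow> bounded (V ` K))
     \<and> bounded (range (\<lambda>x. exp (- V x)))
     \<and> integrable lborel (\<lambda>x. exp (- V x))"

end

theory Submission
  imports Defs "HOL-Probability.Probability"
begin

text \<open>
  Put g(x) = (1 + |x|)^(-s) with s = d + \<alpha>; it is integrable since s > d. The left-hand side
  equals Z^(-1) \<integral> (f - \<mu>_V f)^2 g dx, and the growth condition on V gives e^(-V) \<le> K g.
  Averaging (f x - \<mu>_V f)^2 \<le> 2 (f x - f b)^2 + 2 (f b - \<mu>_V f)^2 over b in the unit ball B,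
  and bounding (f b - \<mu>_V f)^2 \<le> \<mu>_V((f b - f)^2) \<le> (K/Z) \<integral> (f - f b)^2 g by Jensen,
  controls the left-hand side by E = \<integral>_B \<integral> (f w - f b)^2 g(w) dw db. For b \<in> B we have
  |w - b| \<le> 1 + |w|, so g(w) \<le> |w - b|^(-s), and \<omega> e^(-V) is bounded below on B;
  hence E is dominated by the right-hand side.
\<close>

lemma nn_integral_one_plus_abs_powr_lt_top:
  fixes p :: real assumes p: "p > 1"
  shows "(\<integral>\<^sup>+t. ennreal ((1 + \<bar>t\<bar>) powr (-p)) \<partial>lborel) < \<infinity>"
proof -
  define h where "h = (\<lambda>x::real. ennreal (indicator {1..} x * x powr (-p)))"
  have h_measurable[measurable]: "h \<in> borel_measurable borel" unfolding h_def by measurable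
  have "((\<lambda>x::real. x powr (-p)) has_integral -(1 powr (-p+1)) / (-p+1)) {1..}"
    using has_integral_powr_to_inf[of "-p" 1] p by simp
  hence "((\<lambda>x::real. if x \<in> {1..} then x powr (-p) else 0) has_integral -(1 powr (-p+1)) / (-p+1)) UNIV"
    by (simp only: has_integral_restrict_UNIV)
  hence "((\<lambda>x::real. indicator {1..} x * x powr (-p)) has_integral -(1 powr (-p+1)) / (-p+1)) UNIV"
    by (rule has_integral_eq[rotated]) (simp add: indicator_def)
  hence "(\<integral>\<^sup>+x. h x \<partial>lborel) = ennreal (-(1 powr (-p+1)) / (-p+1))"
    unfolding h_def by (rule nn_integral_has_integral_lborel[rotated 2]) auto
  hence h_finite: "(\<integral>\<^sup>+x. h x \<partial>lborel) < \<infinity>" by simp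
  have "(\<integral>\<^sup>+t. ennreal ((1 + \<bar>t\<bar>) powr (-p)) \<partial>lborel) \<le> (\<integral>\<^sup>+t. h (1 + 1 * t) + h (1 + (-1) * t) \<partial>lborel)"
    by (rule nn_integral_mono)
       (auto simp: h_def indicator_def simp flip: ennreal_plus split: abs_split)
  also have "\<dots> = (\<integral>\<^sup>+t. h (1 + 1 * t) \<partial>lborel) + (\<integral>\<^sup>+t. h (1 + (-1) * t) \<partial>lborel)"
    by (rule nn_integral_add) auto
  also have "\<dots> < \<infinity>"
    using h_finite nn_integral_real_affine[OF h_measurable, of 1 1]
      nn_integral_real_affine[OF h_measurable, of "-1" 1]
    by simp
  finally show ?thesis .
qed

lemma one_plus_norm_gt_zero [simp]: "0 < 1 + norm (x::'a::real_normed_vector)"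
  by (simp add: add_pos_nonneg)

lemma one_plus_norm_neq_zero [simp]: "1 + norm (x::'a::real_normed_vector) \<noteq> 0"
  using one_plus_norm_gt_zero[of x] by linarith

lemma nn_integral_one_plus_norm_powr_lt_top:
  fixes s :: real assumes s: "s > real DIM('a::euclidean_space)"
  shows "(\<integral>\<^sup>+x. ennreal ((1 + norm (x::'a)) powr (-s)) \<partial>lborel) < \<infinity>"
proof -
  define q where "q = s / real DIM('a)"
  have q: "q > 1" using s by (simp add: q_def field_simps)
  \<comment> \<open>Split the exponent evenly over the coordinates and use \<open>\<bar>x \<bullet> b\<bar> \<le> norm x\<close>, so that
    the bound is a product of one-dimensional integrable functions.\<close>
  have "(1 + norm x) powr (-s) \<le> (\<Prod>b\<in>Basis. (1 + \<bar>x \<bullet> b\<bar>) powr (-q))" for x :: 'a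
  proof -
    have pos: "(1 + norm x) powr (-q) > 0" by simp
    have "(1 + norm x) powr (-s) = ((1 + norm x) powr (-q)) powr real DIM('a)"
      by (simp add: powr_powr q_def)
    also have "\<dots> = (\<Prod>b\<in>(Basis::'a set). (1 + norm x) powr (-q))"
      using powr_realpow[OF pos] by simp
    also have "\<dots> \<le> (\<Prod>b\<in>Basis. (1 + \<bar>x \<bullet> b\<bar>) powr (-q))"
      using q by (intro prod_mono) (auto intro!: powr_mono2' Basis_le_norm)
    finally show ?thesis .
  qed
  hence "(\<integral>\<^sup>+x. ennreal ((1 + norm (x::'a)) powr (-s)) \<partial>lborel)
     \<le> (\<integral>\<^sup>+x. ennreal (\<Prod>b\<in>Basis. (1 + \<bar>(x::'a) \<bullet> b\<bar>) powr (-q)) \<partial>lborel)"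
    by (intro nn_integral_mono ennreal_leI)
  also have "\<dots> = (\<Prod>b\<in>(Basis::'a set). (\<integral>\<^sup>+t. ennreal ((1 + \<bar>t\<bar>) powr (-q)) \<partial>lborel))"
    using nn_integral_lborel_prod[where f="\<lambda>b t. (1 + \<bar>t\<bar>) powr (-q)"]
    by (simp add: prod_ennreal)
  also have "\<dots> < \<infinity>"
    using nn_integral_one_plus_abs_powr_lt_top[OF q] by (simp add: less_top power_less_top_ennreal)
  finally show ?thesis .
qed

lemma exp_neg_le_of_mult_powr_less:
  fixes c r s v :: real
  assumes "0 < c" "0 \<le> s" "1 \<le> r" "c * r powr s < exp v"
  shows "exp (- v) \<le> 2 powr s / c * (1 + r) powr (-s)"
proof -
  have rpos: "r powr s > 0" using assms(3) by simp
  hence "exp (- v) \<le> 1 / (c * r powr s)"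
    using assms(1,4) by (simp add: exp_minus field_simps)
  also have "\<dots> \<le> 2 powr s / c * (1 + r) powr (-s)"
  proof -
    have "(1 + r) powr s \<le> 2 powr s * r powr s"
      using powr_mono2[of s "1 + r" "2 * r"] assms(2,3) by (simp add: powr_mult)
    thus ?thesis using assms(1,3) rpos by (simp add: powr_minus field_simps)
  qed
  finally show ?thesis .
qed

lemma exp_neg_le_poly_decay:
  fixes V :: "'a::real_normed_vector \<Rightarrow> real" and s :: real
  assumes bd: "bounded (range (\<lambda>x. exp (- V x)))" and s: "s > 0"
    and lim: "Liminf at_infinity (\<lambda>x. ereal (exp (V x) / norm x powr s)) > 0"
  shows "\<exists>K>0. \<forall>z. exp (- V z) \<le> K * (1 + norm z) powr (-s)"
proof -
  obtain E where E: "\<And>x. exp (- V x) \<le> E"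
    using bd unfolding bounded_iff by (auto simp del: exp_minus)
  obtain c where c: "0 < c" "ereal c < Liminf at_infinity (\<lambda>x. ereal (exp (V x) / norm x powr s))"
    using ereal_dense2[OF lim] by (metis ereal_less(2))
  have "eventually (\<lambda>x. ereal c < ereal (exp (V x) / norm x powr s)) at_infinity"
    by (rule less_LiminfD[OF c(2)])
  then obtain R where R: "\<And>x. R \<le> norm x \<Longrightarrow> c < exp (V x) / norm x powr s"
    unfolding eventually_at_infinity by auto
  define R1 where "R1 = max R 1"
  define K where "K = max (2 powr s / c) (E * (1 + R1) powr s) + 1"
  have "exp (- V z) \<le> K * (1 + norm z) powr (-s)" for z
  proof (cases "R1 \<le> norm z")
    case True
    hence nz: "1 \<le> norm z" "R \<le> norm z" unfolding R1_def by auto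
    moreover have "norm z powr s > 0" using nz(1) by auto
    ultimately have "c * norm z powr s < exp (V z)"
      using R[OF nz(2)] by (simp add: pos_less_divide_eq mult.commute)
    hence "exp (- V z) \<le> 2 powr s / c * (1 + norm z) powr (-s)"
      using c s nz(1) by (intro exp_neg_le_of_mult_powr_less) auto
    also have "\<dots> \<le> K * (1 + norm z) powr (-s)"
      by (intro mult_right_mono) (auto simp: K_def)
    finally show ?thesis .
  next
    case False
    have "E \<ge> 0" using E[of z] by (meson exp_ge_zero order.trans)
    hence "E * (1 + norm z) powr s \<le> E * (1 + R1) powr s"
      using False s by (intro mult_left_mono powr_mono2) auto
    hence "E \<le> E * (1 + R1) powr s * (1 + norm z) powr (-s)"
      by (simp add: powr_minus field_simps)
    also have "\<dots> \<le> K * (1 + norm z) powr (-s)"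
      by (intro mult_right_mono) (auto simp: K_def)
    finally show ?thesis using E[of z] by linarith
  qed
  moreover have "K > 0"
    using c unfolding K_def by (smt (verit) divide_pos_pos max.cobounded1 powr_gt_zero)
  ultimately show ?thesis by blast
qed

lemma (in prob_space) expectation_sq_le_nn_integral_sq:
  fixes X :: "'a \<Rightarrow> real"
  assumes [measurable]: "X \<in> borel_measurable M" and bound: "\<And>x. \<bar>X x\<bar> \<le> B"
  shows "ennreal ((expectation X)\<^sup>2) \<le> (\<integral>\<^sup>+x. ennreal ((X x)\<^sup>2) \<partial>M)"
proof -
  have "integrable M X"
    using bound by (intro integrable_const_bound[where B=B]) auto
  moreover have square_integrable: "integrable M (\<lambda>x. (X x)\<^sup>2)"
  proof (intro integrable_const_bound[where B="B\<^sup>2"] AE_I2)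
    show "norm ((X x)\<^sup>2) \<le> B\<^sup>2" for x
      using bound[of x] by (simp add: abs_le_square_iff[symmetric])
  qed simp
  moreover have "variance X \<ge> 0" by (intro integral_nonneg_AE) auto
  ultimately have "(expectation X)\<^sup>2 \<le> expectation (\<lambda>x. (X x)\<^sup>2)"
    using variance_eq by simp
  thus ?thesis
    by (simp add: nn_integral_eq_integral[OF square_integrable] ennreal_leI)
qed

lemma Z_V_pos:
  assumes "admissible_V V" shows "Z_V V > 0"
proof -
  have integrable: "integrable lborel (\<lambda>x. exp (- V x))"
    using assms unfolding admissible_V_def by blast
  have "Z_V V \<noteq> 0"
  proof
    assume "Z_V V = 0"
    hence "AE x in lborel. exp (- V x) = 0"
      using integral_nonneg_eq_0_iff_AE[OF integrable] unfolding Z_V_def by auto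
    hence "ae_filter (lborel::'a measure) = bot" by (simp add: trivial_limit_def)
    thus False by (simp add: ae_filter_eq_bot_iff)
  qed
  moreover have "Z_V V \<ge> 0" unfolding Z_V_def by (intro integral_nonneg_AE) auto
  ultimately show ?thesis by simp
qed

lemma sets_mu_V [simp, measurable_cong]: "sets (mu_V V) = sets borel"
  by (simp add: mu_V_def)

lemma nn_integral_mu_V:
  assumes "admissible_V V" and [measurable]: "h \<in> borel_measurable borel"
  shows "(\<integral>\<^sup>+x. h x \<partial>mu_V V) = (\<integral>\<^sup>+x. ennreal (exp (- V x) / Z_V V) * h x \<partial>lborel)"
proof -
  have [measurable]: "V \<in> borel_measurable borel"
    using assms(1) unfolding admissible_V_def by simp
  show ?thesis unfolding mu_V_def by (rule nn_integral_density) auto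
qed

lemma prob_space_mu_V:
  assumes adm: "admissible_V V" shows "prob_space (mu_V V)"
proof
  have Z: "Z_V V > 0" by (rule Z_V_pos[OF adm])
  have [measurable]: "V \<in> borel_measurable borel"
    using adm unfolding admissible_V_def by simp
  have "(\<integral>\<^sup>+x. ennreal (exp (- V x)) \<partial>lborel) = ennreal (Z_V V)"
    using adm unfolding Z_V_def admissible_V_def by (intro nn_integral_eq_integral) auto
  hence "(\<integral>\<^sup>+x. ennreal (exp (- V x) / Z_V V) \<partial>lborel) = 1"
    using Z by (simp add: divide_ennreal[symmetric] nn_integral_divide)
  thus "emeasure (mu_V V) (space (mu_V V)) = 1"
    unfolding mu_V_def by (simp add: emeasure_density)
qed

lemma sq_diff_le_two_sq_add:
  fixes a b c :: real shows "(a - c)\<^sup>2 \<le> 2 * (a - b)\<^sup>2 + 2 * (b - c)\<^sup>2"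
proof -
  have "2 * (a - b)\<^sup>2 + 2 * (b - c)\<^sup>2 - (a - c)\<^sup>2 = (a - 2 * b + c)\<^sup>2"
    by (simp add: power2_eq_square algebra_simps)
  thus ?thesis by (metis diff_ge_0_iff_ge zero_le_power2)
qed

lemma emeasure_mult_sq_diff_le:
  fixes f :: "'a \<Rightarrow> real"
  assumes [measurable]: "f \<in> borel_measurable M" "B \<in> sets M"
  shows "emeasure M B * ennreal ((y - m)\<^sup>2)
    \<le> 2 * (\<integral>\<^sup>+b\<in>B. ennreal ((y - f b)\<^sup>2) \<partial>M) + 2 * (\<integral>\<^sup>+b\<in>B. ennreal ((f b - m)\<^sup>2) \<partial>M)"
proof -
  have "emeasure M B * ennreal ((y - m)\<^sup>2) = (\<integral>\<^sup>+b\<in>B. ennreal ((y - m)\<^sup>2) \<partial>M)"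
    using nn_integral_cmult_indicator[of B M "ennreal ((y - m)\<^sup>2)"] by (simp add: mult.commute)
  also have "\<dots> \<le> (\<integral>\<^sup>+b. 2 * (ennreal ((y - f b)\<^sup>2) * indicator B b)
                    + 2 * (ennreal ((f b - m)\<^sup>2) * indicator B b) \<partial>M)"
  proof (intro nn_integral_mono)
    fix b
    have "ennreal ((y - m)\<^sup>2) \<le> ennreal (2 * (y - f b)\<^sup>2 + 2 * (f b - m)\<^sup>2)"
      by (intro ennreal_leI sq_diff_le_two_sq_add)
    thus "ennreal ((y - m)\<^sup>2) * indicator B b \<le> 2 * (ennreal ((y - f b)\<^sup>2) * indicator B b)
                    + 2 * (ennreal ((f b - m)\<^sup>2) * indicator B b)"
      by (simp add: indicator_def ennreal_plus ennreal_mult)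
  qed
  also have "\<dots> = 2 * (\<integral>\<^sup>+b\<in>B. ennreal ((y - f b)\<^sup>2) \<partial>M) + 2 * (\<integral>\<^sup>+b\<in>B. ennreal ((f b - m)\<^sup>2) \<partial>M)"
    by (simp add: nn_integral_add nn_integral_cmult)
  finally show ?thesis .
qed

lemma nn_integral_weighted_sq_dev_le:
  fixes f g :: "'a::euclidean_space \<Rightarrow> real" and m :: real
  assumes [measurable]: "f \<in> borel_measurable borel" "g \<in> borel_measurable borel" "B \<in> sets borel"
    and g_nonneg: "\<And>x. 0 \<le> g x"
  shows "emeasure lborel B * (\<integral>\<^sup>+x. ennreal ((f x - m)\<^sup>2 * g x) \<partial>lborel)
    \<le> 2 * (\<integral>\<^sup>+b\<in>B. (\<integral>\<^sup>+w. ennreal ((f w - f b)\<^sup>2 * g w) \<partial>lborel) \<partial>lborel)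
      + 2 * (\<integral>\<^sup>+x. ennreal (g x) \<partial>lborel) * (\<integral>\<^sup>+b\<in>B. ennreal ((f b - m)\<^sup>2) \<partial>lborel)"
proof -
  define J where "J = (\<integral>\<^sup>+b\<in>B. ennreal ((f b - m)\<^sup>2) \<partial>lborel)"
  define I where "I = (\<lambda>x. \<integral>\<^sup>+b\<in>B. ennreal ((f x - f b)\<^sup>2) \<partial>lborel)"
  have averaged: "emeasure lborel B * ennreal ((f x - m)\<^sup>2) \<le> 2 * I x + 2 * J" for x
    unfolding I_def J_def by (rule emeasure_mult_sq_diff_le) auto
  have "(\<integral>\<^sup>+x. I x * ennreal (g x) \<partial>lborel)
      = (\<integral>\<^sup>+x. \<integral>\<^sup>+b. ennreal ((f x - f b)\<^sup>2 * g x) * indicator B b \<partial>lborel \<partial>lborel)"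
  proof (intro nn_integral_cong)
    fix x
    have "I x * ennreal (g x) = (\<integral>\<^sup>+b. ennreal ((f x - f b)\<^sup>2) * indicator B b * ennreal (g x) \<partial>lborel)"
      unfolding I_def by (rule nn_integral_multc[symmetric]) measurable
    thus "I x * ennreal (g x) = (\<integral>\<^sup>+b. ennreal ((f x - f b)\<^sup>2 * g x) * indicator B b \<partial>lborel)"
      by (simp add: ennreal_mult'' g_nonneg mult_ac)
  qed
  also have "\<dots> = (\<integral>\<^sup>+b\<in>B. (\<integral>\<^sup>+w. ennreal ((f w - f b)\<^sup>2 * g w) \<partial>lborel) \<partial>lborel)"
    by (subst lborel_pair.Fubini') (simp_all add: nn_integral_multc)
  finally have Fubini: "(\<integral>\<^sup>+x. I x * ennreal (g x) \<partial>lborel)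
      = (\<integral>\<^sup>+b\<in>B. (\<integral>\<^sup>+w. ennreal ((f w - f b)\<^sup>2 * g w) \<partial>lborel) \<partial>lborel)" .
  have "emeasure lborel B * (\<integral>\<^sup>+x. ennreal ((f x - m)\<^sup>2 * g x) \<partial>lborel)
      = (\<integral>\<^sup>+x. emeasure lborel B * ennreal ((f x - m)\<^sup>2) * ennreal (g x) \<partial>lborel)"
    by (simp add: nn_integral_cmult[symmetric] ennreal_mult'' g_nonneg mult.assoc)
  also have "\<dots> \<le> (\<integral>\<^sup>+x. (2 * I x + 2 * J) * ennreal (g x) \<partial>lborel)"
    by (intro nn_integral_mono mult_right_mono averaged) simp
  also have "\<dots> = (\<integral>\<^sup>+x. 2 * (I x * ennreal (g x)) + (2 * J) * ennreal (g x) \<partial>lborel)"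
    by (simp add: distrib_right mult.assoc)
  also have "\<dots> = 2 * (\<integral>\<^sup>+x. I x * ennreal (g x) \<partial>lborel) + 2 * J * (\<integral>\<^sup>+x. ennreal (g x) \<partial>lborel)"
    unfolding I_def by (simp add: nn_integral_add nn_integral_cmult)
  finally show ?thesis unfolding Fubini J_def by (simp add: mult_ac)
qed

lemma sq_dev_mean_V_le_weighted_energy:
  fixes V f g :: "'a::euclidean_space \<Rightarrow> real"
  assumes adm: "admissible_V V"
    and [measurable]: "f \<in> borel_measurable borel" "g \<in> borel_measurable borel"
    and f_bounded: "bounded (range f)" and g_nonneg: "\<And>z. 0 \<le> g z"
    and decay: "\<And>z. exp (- V z) \<le> K * g z"
  shows "ennreal ((f b - mean_V V f)\<^sup>2)
    \<le> ennreal (K / Z_V V) * (\<integral>\<^sup>+z. ennreal ((f z - f b)\<^sup>2 * g z) \<partial>lborel)"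
proof -
  interpret prob_space "mu_V V" by (rule prob_space_mu_V[OF adm])
  have Z: "Z_V V > 0" by (rule Z_V_pos[OF adm])
  obtain M where M: "\<And>x. \<bar>f x\<bar> \<le> M" using f_bounded unfolding bounded_iff by auto
  have "integrable (mu_V V) f"
    using M by (intro integrable_const_bound[where B=M]) auto
  hence "f b - mean_V V f = expectation (\<lambda>z. f b - f z)"
    unfolding mean_V_def by (simp add: prob_space)
  moreover have "\<bar>f b - f z\<bar> \<le> 2 * M" for z
    using M[of b] M[of z] by linarith
  ultimately have "ennreal ((f b - mean_V V f)\<^sup>2) \<le> (\<integral>\<^sup>+z. ennreal ((f b - f z)\<^sup>2) \<partial>mu_V V)"
    using expectation_sq_le_nn_integral_sq[of "\<lambda>z. f b - f z" "2 * M"] by simp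
  also have "\<dots> = (\<integral>\<^sup>+z. ennreal (exp (- V z) / Z_V V) * ennreal ((f z - f b)\<^sup>2) \<partial>lborel)"
    by (simp add: nn_integral_mu_V[OF adm] power2_commute)
  also have "\<dots> \<le> (\<integral>\<^sup>+z. ennreal (K / Z_V V) * ennreal ((f z - f b)\<^sup>2 * g z) \<partial>lborel)"
  proof (intro nn_integral_mono)
    fix z
    have "exp (- V z) * (f z - f b)\<^sup>2 \<le> K * g z * (f z - f b)\<^sup>2"
      using decay[of z] by (rule mult_right_mono) simp
    hence "exp (- V z) / Z_V V * (f z - f b)\<^sup>2 \<le> K / Z_V V * ((f z - f b)\<^sup>2 * g z)"
      using Z by (simp add: field_simps)
    thus "ennreal (exp (- V z) / Z_V V) * ennreal ((f z - f b)\<^sup>2)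
        \<le> ennreal (K / Z_V V) * ennreal ((f z - f b)\<^sup>2 * g z)"
      using Z g_nonneg by (simp add: ennreal_leI flip: ennreal_mult'')
  qed
  also have "\<dots> = ennreal (K / Z_V V) * (\<integral>\<^sup>+z. ennreal ((f z - f b)\<^sup>2 * g z) \<partial>lborel)"
    by (simp add: nn_integral_cmult)
  finally show ?thesis .
qed

lemma sq_diff_mul_poly_weight_le_kernel:
  fixes f :: "'a::real_normed_vector \<Rightarrow> real" and s :: real
  assumes "norm x \<le> 1" "0 \<le> s"
  shows "(f y - f x)\<^sup>2 * (1 + norm y) powr (-s) \<le> (f y - f x)\<^sup>2 / norm (y - x) powr s"
proof (cases "y = x")
  case False
  have "norm (y - x) \<le> 1 + norm y"
    using norm_triangle_ineq4[of y x] assms(1) by linarith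
  hence "norm (y - x) powr s \<le> (1 + norm y) powr s"
    using assms(2) by (intro powr_mono2) auto
  thus ?thesis
    using False by (simp add: powr_minus divide_inverse[symmetric] divide_left_mono)
qed simp

lemma exp_neg_V_mul_bounded_below_on_compact:
  fixes V \<omega> :: "'a::euclidean_space \<Rightarrow> real"
  assumes adm: "admissible_V V" and \<omega>: "continuous_on UNIV \<omega>" "\<And>x. 0 < \<omega> x"
    and S: "compact S"
  shows "\<exists>c>0. \<forall>b\<in>S. c \<le> exp (- V b) * \<omega> b"
proof (cases "S = {}")
  case False
  obtain x0 where x0: "\<And>y. y \<in> S \<Longrightarrow> \<omega> x0 \<le> \<omega> y"
    using continuous_attains_inf[OF S False continuous_on_subset[OF \<omega>(1)]] by auto
  have "bounded (V ` S)" using adm S unfolding admissible_V_def by blast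
  then obtain A where A: "\<And>b. b \<in> S \<Longrightarrow> V b \<le> A"
    unfolding bounded_iff by (metis abs_le_D1 image_eqI real_norm_def)
  have "exp (- A) * \<omega> x0 \<le> exp (- V b) * \<omega> b" if "b \<in> S" for b
    using A[OF that] x0[OF that] \<omega>(2)[of x0] by (intro mult_mono) auto
  moreover have "exp (- A) * \<omega> x0 > 0" using \<omega>(2) by simp
  ultimately show ?thesis by blast
qed (use zero_less_one in blast)

lemma unit_ball_energy_le_energy_mu_V:
  fixes V f \<omega> :: "'a::euclidean_space \<Rightarrow> real"
  assumes adm: "admissible_V V" and s: "0 \<le> s"
    and [measurable]: "f \<in> borel_measurable borel" "\<omega> \<in> borel_measurable borel"
    and lower: "\<And>b. b \<in> cball 0 1 \<Longrightarrow> c \<le> exp (- V b) * \<omega> b"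
  shows "ennreal (c / Z_V V) *
      (\<integral>\<^sup>+b\<in>cball 0 1. (\<integral>\<^sup>+w. ennreal ((f w - f b)\<^sup>2 * (1 + norm w) powr (-s)) \<partial>lborel) \<partial>lborel)
    \<le> (\<integral>\<^sup>+x. ennreal (\<omega> x) * (\<integral>\<^sup>+y. ennreal ((f y - f x)\<^sup>2 / norm (y - x) powr s) \<partial>lborel) \<partial>mu_V V)"
proof -
  have Z: "Z_V V > 0" by (rule Z_V_pos[OF adm])
  have "ennreal (c / Z_V V) * ((\<integral>\<^sup>+w. ennreal ((f w - f x)\<^sup>2 * (1 + norm w) powr (-s)) \<partial>lborel)
          * indicator (cball 0 1) x)
      \<le> ennreal (exp (- V x) / Z_V V) *
          (ennreal (\<omega> x) * (\<integral>\<^sup>+y. ennreal ((f y - f x)\<^sup>2 / norm (y - x) powr s) \<partial>lborel))" for x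
  proof (cases "x \<in> cball 0 1")
    case True
    have "c / Z_V V \<le> exp (- V x) / Z_V V * \<omega> x"
      using lower[OF True] Z by (simp add: divide_right_mono)
    hence "ennreal (c / Z_V V) \<le> ennreal (exp (- V x) / Z_V V) * ennreal (\<omega> x)"
      using Z by (simp add: ennreal_leI flip: ennreal_mult')
    moreover have "(\<integral>\<^sup>+w. ennreal ((f w - f x)\<^sup>2 * (1 + norm w) powr (-s)) \<partial>lborel)
        \<le> (\<integral>\<^sup>+y. ennreal ((f y - f x)\<^sup>2 / norm (y - x) powr s) \<partial>lborel)"
      using True s by (intro nn_integral_mono ennreal_leI sq_diff_mul_poly_weight_le_kernel) auto
    ultimately show ?thesis
      using True by (simp add: mult.assoc[symmetric] mult_mono)
  qed simp
  hence "ennreal (c / Z_V V) *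
      (\<integral>\<^sup>+b\<in>cball 0 1. (\<integral>\<^sup>+w. ennreal ((f w - f b)\<^sup>2 * (1 + norm w) powr (-s)) \<partial>lborel) \<partial>lborel)
    \<le> (\<integral>\<^sup>+x. ennreal (exp (- V x) / Z_V V) *
          (ennreal (\<omega> x) * (\<integral>\<^sup>+y. ennreal ((f y - f x)\<^sup>2 / norm (y - x) powr s) \<partial>lborel)) \<partial>lborel)"
    by (subst nn_integral_cmult[symmetric]) (measurable, auto intro!: nn_integral_mono)
  also have "\<dots> = (\<integral>\<^sup>+x. ennreal (\<omega> x) * (\<integral>\<^sup>+y. ennreal ((f y - f x)\<^sup>2 / norm (y - x) powr s) \<partial>lborel) \<partial>mu_V V)"
    by (rule nn_integral_mu_V[OF adm, symmetric]) measurable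
  finally show ?thesis .
qed

lemma ennreal_mult_le_imp_le_divide:
  assumes "0 < a" "ennreal a * x \<le> y"
  shows "x \<le> ennreal (1 / a) * y"
proof -
  have "x = ennreal (1 / a) * (ennreal a * x)"
    using assms(1) by (simp add: mult.assoc[symmetric] flip: ennreal_mult)
  also have "\<dots> \<le> ennreal (1 / a) * y" using assms(2) by (rule mult_left_mono) simp
  finally show ?thesis .
qed

lemma nn_integral_mu_V_weighted_sq_dev:
  fixes V f :: "'a::euclidean_space \<Rightarrow> real" and m s :: real
  assumes adm: "admissible_V V" and [measurable]: "f \<in> borel_measurable borel"
  shows "(\<integral>\<^sup>+x. ennreal ((f x - m)\<^sup>2 * exp (V x) / (1 + norm x) powr s) \<partial>mu_V V)
    = ennreal (1 / Z_V V) * (\<integral>\<^sup>+x. ennreal ((f x - m)\<^sup>2 * (1 + norm x) powr (-s)) \<partial>lborel)"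
proof -
  have Z: "Z_V V > 0" by (rule Z_V_pos[OF adm])
  have [measurable]: "V \<in> borel_measurable borel"
    using adm unfolding admissible_V_def by simp
  have "(\<integral>\<^sup>+x. ennreal ((f x - m)\<^sup>2 * exp (V x) / (1 + norm x) powr s) \<partial>mu_V V)
      = (\<integral>\<^sup>+x. ennreal (exp (- V x) / Z_V V) *
           ennreal ((f x - m)\<^sup>2 * exp (V x) / (1 + norm x) powr s) \<partial>lborel)"
    by (rule nn_integral_mu_V[OF adm]) measurable
  also have "\<dots> = (\<integral>\<^sup>+x. ennreal (1 / Z_V V) * ennreal ((f x - m)\<^sup>2 * (1 + norm x) powr (-s)) \<partial>lborel)"
    using Z by (intro nn_integral_cong)
      (simp add: powr_minus exp_minus field_simps flip: ennreal_mult')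
  also have "\<dots> = ennreal (1 / Z_V V) * (\<integral>\<^sup>+x. ennreal ((f x - m)\<^sup>2 * (1 + norm x) powr (-s)) \<partial>lborel)"
    by (rule nn_integral_cmult) measurable
  finally show ?thesis .
qed

lemma weighted_variance_le_unit_ball_energy:
  fixes V f :: "'a::euclidean_space \<Rightarrow> real" and s K G :: real
  assumes adm: "admissible_V V"
    and G: "(\<integral>\<^sup>+x. ennreal ((1 + norm (x::'a)) powr (-s)) \<partial>lborel) = ennreal G" "0 \<le> G"
    and K: "0 \<le> K" "\<And>z. exp (- V z) \<le> K * (1 + norm z) powr (-s)"
    and [measurable]: "f \<in> borel_measurable borel" and f_bounded: "bounded (range f)"
  shows "ennreal (unit_ball_vol (real DIM('a))) *
      (\<integral>\<^sup>+x. ennreal ((f x - mean_V V f)\<^sup>2 * (1 + norm x) powr (-s)) \<partial>lborel)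
    \<le> ennreal (2 * (1 + G * K / Z_V V)) *
      (\<integral>\<^sup>+b\<in>cball 0 1. (\<integral>\<^sup>+w. ennreal ((f w - f b)\<^sup>2 * (1 + norm w) powr (-s)) \<partial>lborel) \<partial>lborel)"
    (is "_ \<le> _ * ?D")
proof -
  define Z where "Z = Z_V V"
  define g where "g = (\<lambda>x::'a. (1 + norm x) powr (-s))"
  define J where "J = (\<integral>\<^sup>+b\<in>cball 0 1. ennreal ((f b - mean_V V f)\<^sup>2) \<partial>lborel)"
  have Z: "Z > 0" unfolding Z_def by (rule Z_V_pos[OF adm])
  have [measurable]: "g \<in> borel_measurable borel" "cball (0::'a) 1 \<in> sets borel"
    unfolding g_def by auto
  have "J \<le> (\<integral>\<^sup>+b. ennreal (K / Z) * ((\<integral>\<^sup>+w. ennreal ((f w - f b)\<^sup>2 * g w) \<partial>lborel)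
                   * indicator (cball 0 1) b) \<partial>lborel)"
    unfolding J_def Z_def g_def
    using sq_dev_mean_V_le_weighted_energy[OF adm _ _ f_bounded _ K(2)]
    by (intro nn_integral_mono) (auto simp: indicator_def)
  also have "\<dots> = ennreal (K / Z) * ?D"
    unfolding g_def by (rule nn_integral_cmult) measurable
  finally have J: "J \<le> ennreal (K / Z) * ?D" .
  have "ennreal (unit_ball_vol (real DIM('a))) *
      (\<integral>\<^sup>+x. ennreal ((f x - mean_V V f)\<^sup>2 * g x) \<partial>lborel) \<le> 2 * ?D + 2 * ennreal G * J"
    using nn_integral_weighted_sq_dev_le[of f g "cball 0 1" "mean_V V f"]
    by (simp add: J_def g_def emeasure_cball G(1))
  also have "\<dots> \<le> 2 * ?D + 2 * ennreal G * (ennreal (K / Z) * ?D)"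
    by (intro add_left_mono mult_left_mono J) simp
  also have "\<dots> = ennreal (2 * (1 + G * K / Z)) * ?D"
  proof -
    have "ennreal (2 * (1 + G * K / Z)) = 2 * (1 + ennreal G * ennreal (K / Z))"
      using Z K G by (simp only: times_divide_eq_right[symmetric] ennreal_mult ennreal_plus
          ennreal_1 ennreal_numeral divide_nonneg_nonneg mult_nonneg_nonneg add_nonneg_nonneg
          less_imp_le zero_le_numeral zero_le_one)
    thus ?thesis by (simp only: distrib_left distrib_right mult.assoc mult_1)
  qed
  finally show ?thesis unfolding Z_def g_def .
qed

lemma weighted_variance_mu_V_le_energy:
  fixes V f \<omega> :: "'a::euclidean_space \<Rightarrow> real" and s K G c :: real
  assumes adm: "admissible_V V" and s: "0 \<le> s"
    and G: "(\<integral>\<^sup>+x. ennreal ((1 + norm (x::'a)) powr (-s)) \<partial>lborel) = ennreal G" "0 \<le> G"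
    and K: "0 \<le> K" "\<And>z. exp (- V z) \<le> K * (1 + norm z) powr (-s)"
    and c: "0 < c" "\<And>b. b \<in> cball 0 1 \<Longrightarrow> c \<le> exp (- V b) * \<omega> b"
    and [measurable]: "\<omega> \<in> borel_measurable borel"
    and f_measurable[measurable]: "f \<in> borel_measurable borel" and f_bounded: "bounded (range f)"
  shows "(\<integral>\<^sup>+x. ennreal ((f x - mean_V V f)\<^sup>2 * exp (V x) / (1 + norm x) powr s) \<partial>mu_V V)
    \<le> ennreal (2 * (1 + G * K / Z_V V) / (unit_ball_vol (real DIM('a)) * c)) *
      (\<integral>\<^sup>+x. ennreal (\<omega> x) * (\<integral>\<^sup>+y. ennreal ((f y - f x)\<^sup>2 / norm (y - x) powr s) \<partial>lborel) \<partial>mu_V V)"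
    (is "?L \<le> ennreal ?C * ?R")
proof -
  define Z where "Z = Z_V V"
  define vol where "vol = unit_ball_vol (real DIM('a))"
  define a where "a = 2 * (1 + G * K / Z)"
  define X where "X = (\<integral>\<^sup>+x. ennreal ((f x - mean_V V f)\<^sup>2 * (1 + norm x) powr (-s)) \<partial>lborel)"
  define D where "D = (\<integral>\<^sup>+b\<in>cball 0 1. (\<integral>\<^sup>+w. ennreal ((f w - f b)\<^sup>2 * (1 + norm w) powr (-s)) \<partial>lborel) \<partial>lborel)"
  have Z: "Z > 0" unfolding Z_def by (rule Z_V_pos[OF adm])
  have vol: "vol > 0" unfolding vol_def by simp
  have a: "a \<ge> 0" using Z G K by (simp add: a_def)
  have "X \<le> ennreal (1 / vol) * (ennreal a * D)"
    using weighted_variance_le_unit_ball_energy[OF adm G K f_measurable f_bounded]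
    unfolding X_def D_def a_def Z_def vol_def by (rule ennreal_mult_le_imp_le_divide[OF vol[unfolded vol_def]])
  moreover have "D \<le> ennreal (Z / c) * ?R"
    using ennreal_mult_le_imp_le_divide[of "c / Z" D ?R] unit_ball_energy_le_energy_mu_V[OF adm s _ _ c(2)] c Z
    unfolding D_def Z_def by simp
  moreover have "?L = ennreal (1 / Z) * X"
    unfolding X_def Z_def by (rule nn_integral_mu_V_weighted_sq_dev[OF adm f_measurable])
  ultimately have "?L \<le> ennreal (1 / Z) * (ennreal (1 / vol) * (ennreal a * (ennreal (Z / c) * ?R)))"
    by (auto intro!: mult_left_mono elim!: order_trans)
  also have "\<dots> = ennreal (1 / Z * (1 / vol * (a * (Z / c)))) * ?R"
    using Z vol c a
    by (simp only: mult.assoc[symmetric] ennreal_mult[symmetric] divide_nonneg_nonneg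
        mult_nonneg_nonneg less_imp_le zero_le_numeral zero_le_one)
  also have "1 / Z * (1 / vol * (a * (Z / c))) = ?C"
    using Z by (simp add: Z_def vol_def a_def)
  finally show ?thesis .
qed

lemma Cb_inf_bounded_measurable:
  assumes "Cb_inf f"
  shows "bounded (range f)" "f \<in> borel_measurable borel"
proof -
  from assms show "bounded (range f)" by (auto elim: Cb_inf.cases)
  from assms have "\<forall>x. f differentiable (at x)" by (auto elim: Cb_inf.cases)
  hence "continuous_on UNIV f"
    by (meson continuous_at_imp_continuous_on differentiable_imp_continuous_within)
  thus "f \<in> borel_measurable borel" by (rule borel_measurable_continuous_onI)
qed

theorem proposition1p7:
  fixes V :: "'a::euclidean_space \<Rightarrow> real" and \<alpha> :: real and \<omega> :: "'a \<Rightarrow> real"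
  assumes "admissible_V V"
    and "0 < \<alpha>" and "\<alpha> < 2"
    and "Liminf at_infinity (\<lambda>x. ereal (exp (V x) / norm x powr (real DIM('a) + \<alpha>))) > 0"
    and "continuous_on UNIV \<omega>" and "\<forall>x. \<omega> x > 0"
  shows "\<exists>C>0. \<forall>f. Cb_inf f \<longrightarrow>
    (\<integral>\<^sup>+x. ennreal ((f x - mean_V V f)\<^sup>2 * exp (V x) / (1 + norm x) powr (real DIM('a) + \<alpha>)) \<partial>mu_V V)
    \<le> ennreal C * (\<integral>\<^sup>+x. ennreal (\<omega> x) *
         (\<integral>\<^sup>+y. ennreal ((f y - f x)\<^sup>2 / norm (y - x) powr (real DIM('a) + \<alpha>)) \<partial>lborel) \<partial>mu_V V)"
    (is "\<exists>C>0. \<forall>f. Cb_inf f \<longrightarrow> ?L f \<le> ennreal C * ?R f")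
proof -
  define s where "s = real DIM('a) + \<alpha>"
  have s: "real DIM('a) < s" "0 < s" using assms(2) by (auto simp: s_def)
  obtain G where G: "(\<integral>\<^sup>+x. ennreal ((1 + norm (x::'a)) powr (-s)) \<partial>lborel) = ennreal G" "0 \<le> G"
    using nn_integral_one_plus_norm_powr_lt_top[OF s(1)] by (auto simp: less_top_ennreal)
  have "bounded (range (\<lambda>x. exp (- V x)))"
    using assms(1) unfolding admissible_V_def by blast
  then obtain K where K: "0 < K" "\<And>z. exp (- V z) \<le> K * (1 + norm z) powr (-s)"
    using exp_neg_le_poly_decay[OF _ s(2) assms(4)[folded s_def]] by blast
  obtain c where c: "0 < c" "\<And>b. b \<in> cball 0 1 \<Longrightarrow> c \<le> exp (- V b) * \<omega> b"
    using exp_neg_V_mul_bounded_below_on_compact[OF assms(1,5) _ compact_cball] assms(6) by blast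
  have [measurable]: "\<omega> \<in> borel_measurable borel"
    using assms(5) by (rule borel_measurable_continuous_onI)
  define C where "C = 2 * (1 + G * K / Z_V V) / (unit_ball_vol (real DIM('a)) * c)"
  have "C > 0"
    using G K c Z_V_pos[OF assms(1)] by (simp add: C_def add_pos_nonneg)
  moreover have "?L f \<le> ennreal C * ?R f" if "Cb_inf f" for f
    unfolding s_def[symmetric] C_def
    using weighted_variance_mu_V_le_energy[OF assms(1) less_imp_le[OF s(2)] G less_imp_le[OF K(1)]
        K(2) c _ Cb_inf_bounded_measurable(2,1)[OF that]]
    by simp
  ultimately show ?thesis by blast
qed

end
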